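(* Let $A$ be a unital power-associative algebra over a field of characteristic zero and let $R$ be a Rota–Baxter operator of nonzero weight $\lambda$ on $A$. If $R(1)$ is nilpotent, then $R(1)=0$ and $R$ is splitting.
   Context: A linear operator $R\colon A\to A$ is a Rota–Baxter operator of weight $\lambda$ if $R(x)R(y)=R(R(x)y+xR(y)+\lambda xy)$ for all $x,y\in A$. An algebra is power-associative if every element generates an associative subalgebra. An RB-operator $R$ of weight $\lambda$ is splitting if $A=A_1\oplus A_2$ as vector spaces for subalgebras $A_1,A_2$ and $R(a_1+a_2)=-\lambda a_2$ for $a_1\in A_1$, $a_2\in A_2$. *)

theory Defs
  imports Complex_Main
begin

definition bilinear_mul :: "('k::field \<Rightarrow> 'v::ab_group_add \<Rightarrow> 'v) \<Rightarrow> ('v \<Rightarrow> 'v \<Rightarrow> 'v) \<Rightarrow> bool" where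
  "bilinear_mul scale mul \<longleftrightarrow>
     (\<forall>x y z. mul (x + y) z = mul x z + mul y z) \<and>
     (\<forall>x y z. mul x (y + z) = mul x y + mul x z) \<and>
     (\<forall>a x y. mul (scale a x) y = scale a (mul x y)) \<and>
     (\<forall>a x y. mul x (scale a y) = scale a (mul x y))"

definition alg_unit :: "('v \<Rightarrow> 'v \<Rightarrow> 'v) \<Rightarrow> 'v \<Rightarrow> bool" where
  "alg_unit mul e \<longleftrightarrow> (\<forall>x. mul e x = x \<and> mul x e = x)"

definition subalg :: "('k::field \<Rightarrow> 'v::ab_group_add \<Rightarrow> 'v) \<Rightarrow> ('v \<Rightarrow> 'v \<Rightarrow> 'v) \<Rightarrow> 'v set \<Rightarrow> bool" where
  "subalg scale mul S \<longleftrightarrow> module.subspace scale S \<and> (\<forall>x\<in>S. \<forall>y\<in>S. mul x y \<in> S)"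

definition gen_subalg :: "('k::field \<Rightarrow> 'v::ab_group_add \<Rightarrow> 'v) \<Rightarrow> ('v \<Rightarrow> 'v \<Rightarrow> 'v) \<Rightarrow> 'v \<Rightarrow> 'v set" where
  "gen_subalg scale mul x = \<Inter>{S. subalg scale mul S \<and> x \<in> S}"

definition assoc_on :: "('v \<Rightarrow> 'v \<Rightarrow> 'v) \<Rightarrow> 'v set \<Rightarrow> bool" where
  "assoc_on mul S \<longleftrightarrow> (\<forall>a\<in>S. \<forall>b\<in>S. \<forall>c\<in>S. mul (mul a b) c = mul a (mul b c))"

definition power_assoc :: "('k::field \<Rightarrow> 'v::ab_group_add \<Rightarrow> 'v) \<Rightarrow> ('v \<Rightarrow> 'v \<Rightarrow> 'v) \<Rightarrow> bool" where
  "power_assoc scale mul \<longleftrightarrow> (\<forall>x. assoc_on mul (gen_subalg scale mul x))"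

text \<open>Positive powers x^n (n >= 1), well-defined in a power-associative algebra.\<close>
fun apow :: "('v \<Rightarrow> 'v \<Rightarrow> 'v) \<Rightarrow> 'v \<Rightarrow> nat \<Rightarrow> 'v" where
  "apow mul x 0 = x"   \<comment> \<open>unused convention; only n >= 1 matters\<close>
| "apow mul x (Suc 0) = x"
| "apow mul x (Suc (Suc n)) = mul x (apow mul x (Suc n))"

definition nilpotent_elt :: "('v::zero \<Rightarrow> 'v \<Rightarrow> 'v) \<Rightarrow> 'v \<Rightarrow> bool" where
  "nilpotent_elt mul x \<longleftrightarrow> (\<exists>n\<ge>1. apow mul x n = 0)"

definition rota_baxter :: "('k::field \<Rightarrow> 'v::ab_group_add \<Rightarrow> 'v) \<Rightarrow> ('v \<Rightarrow> 'v \<Rightarrow> 'v) \<Rightarrow> 'k \<Rightarrow> ('v \<Rightarrow> 'v) \<Rightarrow> bool" where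
  "rota_baxter scale mul lam R \<longleftrightarrow> Vector_Spaces.linear scale scale R \<and>
     (\<forall>x y. mul (R x) (R y) = R (mul (R x) y + mul x (R y) + scale lam (mul x y)))"

definition splitting_rb :: "('k::field \<Rightarrow> 'v::ab_group_add \<Rightarrow> 'v) \<Rightarrow> ('v \<Rightarrow> 'v \<Rightarrow> 'v) \<Rightarrow> 'k \<Rightarrow> ('v \<Rightarrow> 'v) \<Rightarrow> bool" where
  "splitting_rb scale mul lam R \<longleftrightarrow> (\<exists>A1 A2. subalg scale mul A1 \<and> subalg scale mul A2 \<and>
      A1 \<inter> A2 = {0} \<and> (\<forall>v. \<exists>a1\<in>A1. \<exists>a2\<in>A2. v = a1 + a2) \<and>
      (\<forall>a1\<in>A1. \<forall>a2\<in>A2. R (a1 + a2) = scale (- lam) a2))"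

end

theory Submission
  imports Defs "HOL-Computational_Algebra.Polynomial"
begin

text \<open>Put \<open>P = -R/\<lambda>\<close> and let \<open>L\<close> be left multiplication by \<open>P(1)\<close>. The Rota--Baxter
  identity with \<open>x = 1\<close> says \<open>LP - PL = P\<^sup>2 - P\<close>, and by induction on the degree this gives
  \<open>P(f(L) 1) = (S f)(L) 1\<close> for every polynomial \<open>f\<close>, where \<open>S\<close> is the antidifference operator:
  \<open>(S f)(x) - (S f)(x - 1) = f(x)\<close>, \<open>(S f)(0) = 0\<close>. If \<open>L^M 1 = 0\<close> with \<open>M \<ge> 2\<close> minimal, then
  \<open>1, L 1, \<dots>, L^(M - 1) 1\<close> are linearly independent while \<open>(S x^M)(L) 1 = P(L^M 1) = 0\<close>, so
  \<open>S x^M\<close> would be divisible by \<open>x^M\<close>; evaluating at \<open>1\<close> and \<open>-1\<close> rules this out. Hence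
  \<open>R(1) = 0\<close>, the identity with \<open>y = 1\<close> gives \<open>R\<^sup>2 = -\<lambda>R\<close>, and \<open>R\<close> splits the algebra into
  \<open>ker R\<close> and \<open>ker (R + \<lambda>)\<close>. Only left multiplications by \<open>R(1)\<close> occur.\<close>

definition is_antidiff :: "'a::comm_ring_1 poly \<Rightarrow> 'a poly \<Rightarrow> bool" where
  "is_antidiff q p \<longleftrightarrow> poly q 0 = 0 \<and> (\<forall>x. poly q x - poly q (x - 1) = poly p x)"

lemma is_antidiff_unique:
  fixes p q q' :: "'a::field_char_0 poly"
  assumes "is_antidiff q p" and "is_antidiff q' p"
  shows "q = q'"
proof -
  define r where "r = q - q'"
  have r_step: "poly r x = poly r (x - 1)" for x
  proof -
    have "poly r x - poly r (x - 1) = (poly q x - poly q (x - 1)) - (poly q' x - poly q' (x - 1))"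
      by (simp add: r_def)
    also have "\<dots> = 0" using assms by (simp add: is_antidiff_def)
    finally show ?thesis by simp
  qed
  have "poly r (of_nat n) = 0" for n
  proof (induction n)
    case 0
    show ?case using assms by (simp add: r_def is_antidiff_def)
  next
    case (Suc n)
    then show ?case using r_step[of "of_nat (Suc n)"] by simp
  qed
  then have "range (of_nat :: nat \<Rightarrow> 'a) \<subseteq> {x. poly r x = 0}" by auto
  moreover have "infinite (range (of_nat :: nat \<Rightarrow> 'a))"
    by (rule range_inj_infinite) (simp add: inj_on_def)
  ultimately have "r = 0" using poly_roots_finite finite_subset by blast
  then show ?thesis by (simp add: r_def)
qed

lemma degree_power_difference_le:
  "degree (monom (1::'a::comm_ring_1) (Suc k) - [:-1, 1:] ^ Suc k) \<le> k"
proof (rule degree_le, intro allI impI)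
  fix i assume "k < i"
  then consider "i = Suc k" | "Suc k < i" by linarith
  then show "coeff (monom 1 (Suc k) - [:-1, 1:] ^ Suc k) i = 0"
  proof cases
    case 1
    then show ?thesis by (simp only: coeff_diff coeff_monom coeff_linear_power) simp
  next
    case 2
    then show ?thesis by (simp add: coeff_eq_0 degree_linear_power)
  qed
qed

lemma coeff_power_difference:
  "coeff (monom (1::'a::comm_ring_1) (Suc k) - [:-1, 1:] ^ Suc k) k = of_nat (Suc k)"
  by (simp only: coeff_diff coeff_monom coeff_linear_poly_power[OF le_SucI[OF order.refl]]) simp

lemma is_antidiff_exists:
  fixes p :: "'a::field_char_0 poly"
  assumes "degree p \<le> k"
  shows "\<exists>q. is_antidiff q p \<and> degree q \<le> Suc k \<and> coeff q (Suc k) = coeff p k / of_nat (Suc k)"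
  using assms
proof (induction k arbitrary: p)
  case 0
  then obtain c where p: "p = [:c:]" by (metis degree_eq_zeroE le_zero_eq)
  then have "is_antidiff [:0, c:] p" by (simp add: is_antidiff_def algebra_simps)
  then show ?case using p by auto
next
  case (Suc k)
  define c where "c = coeff p (Suc k) / of_nat (Suc (Suc k))"
  define d :: "'a poly" where "d = monom 1 (Suc (Suc k)) - [:-1, 1:] ^ Suc (Suc k)"
  define p' where "p' = p - smult c d"
  have deg_d: "degree d \<le> Suc k"
    unfolding d_def by (rule degree_power_difference_le)
  have "degree p' \<le> k"
  proof (rule degree_le, intro allI impI)
    fix i assume "k < i"
    then consider "i = Suc k" | "Suc k < i" by linarith
    then show "coeff p' i = 0"
    proof cases
      case 1
      have "of_nat (Suc (Suc k)) \<noteq> (0::'a)" by (rule of_nat_neq_0)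
      then show ?thesis
        using coeff_power_difference[of "Suc k", where 'a='a] 1 by (simp add: p'_def d_def c_def)
    next
      case 2
      then have "coeff p i = 0" "coeff d i = 0"
        using Suc.prems deg_d by (simp_all add: coeff_eq_0)
      then show ?thesis by (simp add: p'_def)
    qed
  qed
  then obtain q' where q': "is_antidiff q' p'" "degree q' \<le> Suc k" using Suc.IH by blast
  define q where "q = monom c (Suc (Suc k)) + q'"
  have "is_antidiff q p"
    using q'(1) by (simp add: is_antidiff_def q_def p'_def d_def poly_monom algebra_simps)
  moreover have "degree q \<le> Suc (Suc k)"
    using q'(2) by (simp add: q_def degree_add_le degree_monom_le)
  moreover have "coeff q (Suc (Suc k)) = c"
    using q'(2) by (simp add: q_def coeff_eq_0)
  ultimately show ?case by (auto simp: c_def)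
qed


lemma degree_diff_monom_coeff_le:
  assumes "degree p \<le> Suc n"
  shows "degree (p - monom (coeff p (Suc n)) (Suc n)) \<le> n"
proof (rule degree_le, intro allI impI)
  fix i assume "n < i"
  then show "coeff (p - monom (coeff p (Suc n)) (Suc n)) i = 0"
    using assms by (cases "i = Suc n") (simp_all add: coeff_eq_0 coeff_monom)
qed

definition antidiff :: "'a::field_char_0 poly \<Rightarrow> 'a poly" where
  "antidiff p = (THE q. is_antidiff q p)"

lemma is_antidiff_antidiff: "is_antidiff (antidiff p) p"
proof -
  obtain q where "is_antidiff q p"
    using is_antidiff_exists[OF order.refl] by blast
  then show ?thesis
    unfolding antidiff_def
  proof (rule theI)
    show "q' = q" if "is_antidiff q' p" for q'
      using that \<open>is_antidiff q p\<close> by (rule is_antidiff_unique)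
  qed
qed

lemma antidiff_eqI: "is_antidiff q p \<Longrightarrow> antidiff p = q"
  by (rule is_antidiff_unique[OF is_antidiff_antidiff])

lemma poly_antidiff_0 [simp]: "poly (antidiff p) 0 = 0"
  using is_antidiff_antidiff[of p] unfolding is_antidiff_def by blast

lemma poly_antidiff_minus_1: "poly (antidiff p) (x - 1) = poly (antidiff p) x - poly p x"
proof -
  have "poly (antidiff p) x - poly (antidiff p) (x - 1) = poly p x"
    using is_antidiff_antidiff[of p] unfolding is_antidiff_def by blast
  then show ?thesis by (simp add: algebra_simps)
qed

lemma
  assumes "degree p \<le> k"
  shows degree_antidiff_le: "degree (antidiff p) \<le> Suc k"
    and coeff_antidiff_Suc: "coeff (antidiff p) (Suc k) = coeff p k / of_nat (Suc k)"
proof -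
  obtain q where "is_antidiff q p" "degree q \<le> Suc k" "coeff q (Suc k) = coeff p k / of_nat (Suc k)"
    using is_antidiff_exists[OF assms] by blast
  then show "degree (antidiff p) \<le> Suc k" "coeff (antidiff p) (Suc k) = coeff p k / of_nat (Suc k)"
    by (simp_all add: antidiff_eqI)
qed

lemma antidiff_add: "antidiff (p + q) = antidiff p + antidiff q"
proof (rule antidiff_eqI, unfold is_antidiff_def, intro conjI allI)
  fix x
  show "poly (antidiff p + antidiff q) x - poly (antidiff p + antidiff q) (x - 1) = poly (p + q) x"
    by (simp only: poly_add poly_antidiff_minus_1) (simp add: algebra_simps)
qed simp

lemma antidiff_smult: "antidiff (smult c p) = smult c (antidiff p)"
proof (rule antidiff_eqI, unfold is_antidiff_def, intro conjI allI)
  fix x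
  show "poly (smult c (antidiff p)) x - poly (smult c (antidiff p)) (x - 1) = poly (smult c p) x"
    by (simp only: poly_smult poly_antidiff_minus_1) (simp add: algebra_simps)
qed simp

lemma antidiff_const: "antidiff [:c:] = [:0, c:]"
  by (rule antidiff_eqI) (simp add: is_antidiff_def algebra_simps)

text \<open>Summation by parts.\<close>
lemma antidiff_pCons_0: "antidiff (pCons 0 p) = pCons 0 (antidiff p) - antidiff (antidiff p) + antidiff p"
proof (rule antidiff_eqI, unfold is_antidiff_def, intro conjI allI)
  fix x
  let ?Q = "pCons 0 (antidiff p) - antidiff (antidiff p) + antidiff p"
  show "poly ?Q x - poly ?Q (x - 1) = poly (pCons 0 p) x"
    by (simp only: poly_add poly_diff poly_pCons poly_antidiff_minus_1) (simp add: algebra_simps)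
qed simp

lemma antidiff_monom_has_low_coeff:
  assumes "2 \<le> M"
  shows "\<exists>i<M. coeff (antidiff (monom (1::'a::field_char_0) M)) i \<noteq> 0"
proof (rule ccontr)
  define q :: "'a poly" where "q = antidiff (monom 1 M)"
  define a b where "a = coeff q (Suc M)" and "b = coeff q M"
  assume "\<not> ?thesis"
  then have low: "\<forall>i<M. coeff q i = 0"
    by (simp add: q_def)
  have deg: "degree q \<le> Suc M" and a: "a = 1 / of_nat (Suc M)"
    using degree_antidiff_le[of "monom 1 M" M] coeff_antidiff_Suc[of "monom 1 M" M]
    by (simp_all add: q_def a_def degree_monom_le)
  have "q = monom b M + monom a (Suc M)"
  proof (rule poly_eqI)
    fix i
    consider "i < M" | "i = M" | "i = Suc M" | "Suc M < i" by linarith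
    then show "coeff q i = coeff (monom b M + monom a (Suc M)) i"
      by cases (use low deg in \<open>auto simp: a_def b_def coeff_eq_0\<close>)
  qed
  then have poly_q: "poly q x = b * x ^ M + a * x ^ Suc M" for x
    by (simp add: poly_monom)
  have "poly q (0 - 1) = poly q 0 - poly (monom 1 M) 0" and "poly q (1 - 1) = poly q 1 - poly (monom 1 M) 1"
    unfolding q_def by (rule poly_antidiff_minus_1)+
  then have "poly q (- 1) = 0" and "poly q 1 = 1"
    using assms by (simp_all add: q_def poly_monom)
  then have "(-1) ^ M * (b - a) = 0" and "b + a = 1"
    by (simp_all add: poly_q algebra_simps)
  then have "a + a = 1" by simp
  then have "of_nat (Suc M) = (2::'a)"
    by (simp add: a field_simps)
  then have "Suc M = 2"
    by (metis of_nat_eq_iff of_nat_numeral)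
  then show False using assms by simp
qed

lemma one_plus_inverse_of_nat_Suc_neq_0: "1 + 1 / of_nat (Suc n) \<noteq> (0::'a::field_char_0)"
proof
  assume "1 + 1 / of_nat (Suc n) = (0::'a)"
  then have "of_nat (Suc n) + 1 = (0::'a)"
    using of_nat_neq_0[of n, where 'a='a] by (simp add: field_simps)
  then have "of_nat (Suc (Suc n)) = (0::'a)" by simp
  then show False by (simp only: of_nat_eq_0_iff)
qed

locale commutator_relation =
  vector_space scale + L: Vector_Spaces.linear scale scale L + P: Vector_Spaces.linear scale scale P
  for scale :: "'k::field_char_0 \<Rightarrow> 'v::ab_group_add \<Rightarrow> 'v" and L P :: "'v \<Rightarrow> 'v" +
  fixes e :: 'v
  assumes P_e: "P e = L e"
    and commutator: "L (P v) - P (L v) = P (P v) - P v"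
begin

text \<open>\<open>poly_apply p = p(L) e\<close>, by Horner's rule.\<close>
definition poly_apply :: "'k poly \<Rightarrow> 'v" where
  "poly_apply p = fold_coeffs (\<lambda>a v. scale a e + L v) p 0"

lemma poly_apply_0 [simp]: "poly_apply 0 = 0"
  by (simp add: poly_apply_def)

lemma poly_apply_pCons [simp]: "poly_apply (pCons a p) = scale a e + L (poly_apply p)"
  by (cases "p = 0 \<and> a = 0") (auto simp: poly_apply_def L.zero)

lemma poly_apply_add: "poly_apply (p + q) = poly_apply p + poly_apply q"
  by (induction p q rule: poly_induct2) (simp_all add: L.add scale_left_distrib algebra_simps)

lemma poly_apply_smult: "poly_apply (smult c p) = scale c (poly_apply p)"
  by (induction p) (simp_all add: L.scale scale_right_distrib)

lemma poly_apply_diff: "poly_apply (p - q) = poly_apply p - poly_apply q"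
  using poly_apply_add[of "p - q" q] by (simp add: algebra_simps)

lemma poly_apply_monom: "poly_apply (monom c n) = scale c ((L ^^ n) e)"
  by (induction n) (simp_all add: monom_0 monom_Suc L.scale)

lemma funpow_L_add: "(L ^^ n) (x + y) = (L ^^ n) x + (L ^^ n) y"
  by (induction n) (simp_all add: L.add)

lemma funpow_L_scale: "(L ^^ n) (scale c x) = scale c ((L ^^ n) x)"
  by (induction n) (simp_all add: L.scale)

lemma funpow_L_0: "(L ^^ n) 0 = 0"
  by (induction n) (simp_all add: L.zero)

lemma funpow_poly_apply_eq_0:
  assumes "(L ^^ M) e = 0"
  shows "(L ^^ M) (poly_apply p) = 0"
proof (induction p)
  case (pCons a p)
  then show ?case
    using assms by (simp add: funpow_L_add funpow_L_scale funpow_swap1[of L M, symmetric] L.zero)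
qed (simp add: funpow_L_0)

lemma coeff_eq_0_if_funpow_poly_apply_eq_0:
  assumes "(L ^^ M) e = 0" and "(L ^^ (M - 1)) e \<noteq> 0"
    and "(L ^^ j) (poly_apply p) = 0" and "i + j < M"
  shows "coeff p i = 0"
  using assms(3,4)
proof (induction p arbitrary: i j)
  case (pCons a p)
  have split: "(L ^^ k) (poly_apply (pCons a p)) = scale a ((L ^^ k) e) + (L ^^ Suc k) (poly_apply p)" for k
    by (simp add: funpow_L_add funpow_L_scale funpow_swap1)
  have "(L ^^ (M - 1 - j)) ((L ^^ j) (poly_apply (pCons a p))) = 0"
    using pCons.prems(1) by (simp add: funpow_L_0)
  also have "(L ^^ (M - 1 - j)) ((L ^^ j) (poly_apply (pCons a p))) = (L ^^ (M - 1 - j + j)) (poly_apply (pCons a p))"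
    by (simp add: funpow_add)
  also have "M - 1 - j + j = M - 1"
    using pCons.prems(2) by simp
  finally have "scale a ((L ^^ (M - 1)) e) + (L ^^ Suc (M - 1)) (poly_apply p) = 0"
    by (simp only: split)
  moreover have "Suc (M - 1) = M"
    using pCons.prems(2) by simp
  ultimately have "scale a ((L ^^ (M - 1)) e) = 0"
    using funpow_poly_apply_eq_0[OF assms(1), of p] by simp
  then have "a = 0" using assms(2) by simp
  show ?case
  proof (cases i)
    case 0
    then show ?thesis using \<open>a = 0\<close> by simp
  next
    case (Suc i')
    have "(L ^^ Suc j) (poly_apply p) = 0"
      using pCons.prems(1) split[of j] \<open>a = 0\<close> by simp
    then show ?thesis using pCons.IH[of "Suc j" i'] pCons.prems(2) Suc by simp
  qed
qed simp

lemma P_funpow_e_Suc: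
  assumes IH: "\<And>p. degree p \<le> n \<Longrightarrow> P (poly_apply p) = poly_apply (antidiff p)"
  shows "P ((L ^^ Suc n) e) = poly_apply (antidiff (monom 1 (Suc n)))"
proof -
  define q :: "'k poly" where "q = antidiff (monom 1 n)"
  define c where "c = coeff q (Suc n)"
  define r where "r = q - monom c (Suc n)"
  define w where "w = poly_apply q"
  define A where "A = P ((L ^^ Suc n) e)"
  define B where "B = poly_apply (antidiff (monom 1 (Suc n)))"
  have c: "c = 1 / of_nat (Suc n)" and "degree q \<le> Suc n"
    using coeff_antidiff_Suc[of "monom 1 n" n] degree_antidiff_le[of "monom 1 n" n]
    by (simp_all add: c_def q_def degree_monom_le)
  have deg_r: "degree r \<le> n"
    unfolding r_def c_def using \<open>degree q \<le> Suc n\<close> by (rule degree_diff_monom_coeff_le)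
  have q: "q = smult c (monom 1 (Suc n)) + r"
    by (simp add: r_def smult_monom)
  have Pv: "P ((L ^^ n) e) = w"
    using IH[of "monom 1 n"] by (simp add: w_def q_def poly_apply_monom degree_monom_le)
  have Pw: "P w = scale c A + poly_apply (antidiff r)"
    unfolding w_def A_def
    by (subst q) (simp add: poly_apply_add poly_apply_smult poly_apply_monom P.add P.scale IH[OF deg_r]
        del: funpow.simps)
  have "L w - A = P w - w"
    using commutator[of "(L ^^ n) e"] by (simp add: Pv A_def)
  moreover have "B = L w - (scale c B + poly_apply (antidiff r)) + w"
  proof -
    have "antidiff (monom 1 (Suc n)) = pCons 0 q - antidiff q + q"
      by (simp add: monom_Suc antidiff_pCons_0 q_def)
    also have "antidiff q = smult c (antidiff (monom 1 (Suc n))) + antidiff r"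
      by (subst q) (simp add: antidiff_add antidiff_smult)
    finally have "B = poly_apply (pCons 0 q - (smult c (antidiff (monom 1 (Suc n))) + antidiff r) + q)"
      unfolding B_def by (rule arg_cong)
    then show ?thesis
      by (simp add: B_def w_def poly_apply_add poly_apply_diff poly_apply_smult)
  qed
  ultimately have "scale (1 + c) A = scale (1 + c) B"
    using Pw by (simp add: scale_left_distrib algebra_simps)
  then show ?thesis
    using one_plus_inverse_of_nat_Suc_neq_0[of n, where 'a='k] by (simp add: c A_def B_def)
qed

lemma P_poly_apply: "P (poly_apply p) = poly_apply (antidiff p)"
proof -
  have "P (poly_apply p) = poly_apply (antidiff p)" if "degree p \<le> n" for n p
    using that
  proof (induction n arbitrary: p)
    case 0
    then obtain c where "p = [:c:]" by (metis degree_eq_zeroE le_zero_eq)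
    then show ?case by (simp add: antidiff_const P.scale P_e L.zero L.scale)
  next
    case (Suc n)
    define c where "c = coeff p (Suc n)"
    define r where "r = p - monom c (Suc n)"
    have deg_r: "degree r \<le> n"
      unfolding r_def c_def using Suc.prems by (rule degree_diff_monom_coeff_le)
    have "p = smult c (monom 1 (Suc n)) + r"
      by (simp add: r_def smult_monom)
    then show ?case
      by (simp add: poly_apply_add poly_apply_smult poly_apply_monom antidiff_add antidiff_smult
          P.add P.scale Suc.IH[OF deg_r] P_funpow_e_Suc[OF Suc.IH] del: funpow.simps)
  qed
  then show ?thesis by blast
qed

lemma funpow_e_eq_0_imp_L_e_eq_0:
  assumes "(L ^^ N) e = 0"
  shows "L e = 0"
proof -
  define M where "M = (LEAST n. (L ^^ n) e = 0)"
  have M: "(L ^^ M) e = 0"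
    unfolding M_def using assms by (rule LeastI)
  have below_M: "(L ^^ k) e \<noteq> 0" if "k < M" for k
    using that not_less_Least unfolding M_def by blast
  consider "M = 0" | "M = 1" | "2 \<le> M" by linarith
  then show ?thesis
  proof cases
    case 1
    then show ?thesis using M by (simp add: L.zero)
  next
    case 2
    then show ?thesis using M by simp
  next
    case 3
    then obtain i where "i < M" and nonzero: "coeff (antidiff (monom (1::'k) M)) i \<noteq> 0"
      using antidiff_monom_has_low_coeff by blast
    have "poly_apply (antidiff (monom 1 M)) = 0"
      using P_poly_apply[of "monom 1 M"] M by (simp add: poly_apply_monom P.zero)
    then have "coeff (antidiff (monom (1::'k) M)) i = 0"
      using below_M[of "M - 1"] 3 \<open>i < M\<close>
      by (intro coeff_eq_0_if_funpow_poly_apply_eq_0[OF M, of 0]) simp_all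
    with nonzero show ?thesis by contradiction
  qed
qed

end

lemma apow_Suc_eq_funpow: "apow mul x (Suc n) = (mul x ^^ n) x"
  by (induction n) simp_all

locale rota_baxter_algebra = vector_space scale
  for scale :: "'k::field \<Rightarrow> 'v::ab_group_add \<Rightarrow> 'v" +
  fixes mul :: "'v \<Rightarrow> 'v \<Rightarrow> 'v" and lam :: 'k and R :: "'v \<Rightarrow> 'v"
  assumes bilinear: "bilinear_mul scale mul"
    and rota_baxter: "rota_baxter scale mul lam R"
begin

sublocale R: Vector_Spaces.linear scale scale R
  using rota_baxter by (simp add: rota_baxter_def)

lemma rota_baxter_identity: "mul (R x) (R y) = R (mul (R x) y + mul x (R y) + scale lam (mul x y))"
  using rota_baxter by (simp add: rota_baxter_def)

lemma
  shows mul_add_right: "mul x (y + z) = mul x y + mul x z"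
    and mul_scale_left: "mul (scale c x) y = scale c (mul x y)"
    and mul_scale_right: "mul x (scale c y) = scale c (mul x y)"
  using bilinear by (simp_all add: bilinear_mul_def)

lemma linear_mul_left: "Vector_Spaces.linear scale scale (mul x)"
  by (simp add: Vector_Spaces.linear_iff vector_space_axioms mul_add_right mul_scale_right)

lemma
  shows mul_zero_left: "mul 0 x = 0"
    and mul_zero_right: "mul x 0 = 0"
  using mul_scale_left[of 0 0 x] mul_scale_right[of x 0 0] by simp_all

lemma
  shows mul_minus_left: "mul (- x) y = - mul x y"
    and mul_minus_right: "mul x (- y) = - mul x y"
  using mul_scale_left[of "-1" x y] mul_scale_right[of x "-1" y] by simp_all

lemma apow_scale: "apow mul (scale c x) (Suc n) = scale (c ^ Suc n) (apow mul x (Suc n))"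
  by (induction n) (simp_all add: mul_scale_left mul_scale_right mult.commute)

lemma splitting_if_square:
  assumes "lam \<noteq> 0" and square: "\<And>x. R (R x) = scale (- lam) (R x)"
  shows "splitting_rb scale mul lam R"
proof -
  define A1 where "A1 = {x. R x = 0}"
  define A2 where "A2 = {x. R x = scale (- lam) x}"
  have "subalg scale mul A1"
    unfolding subalg_def subspace_def A1_def
  proof (intro conjI ballI allI)
    fix x y assume "x \<in> {x. R x = 0}" and "y \<in> {x. R x = 0}"
    then have "R (scale lam (mul x y)) = 0"
      using rota_baxter_identity[of x y] by (simp add: mul_zero_left mul_zero_right R.zero)
    then show "mul x y \<in> {x. R x = 0}" using assms(1) by (simp add: R.scale)
  qed (auto simp: R.zero R.add R.scale)
  moreover have "subalg scale mul A2"
    unfolding subalg_def subspace_def A2_def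
  proof (intro conjI ballI allI)
    fix x y assume "x \<in> {x. R x = scale (- lam) x}" and "y \<in> {x. R x = scale (- lam) x}"
    then have "scale (- lam) (R (mul x y)) = scale (- lam) (scale (- lam) (mul x y))"
      using rota_baxter_identity[of x y]
      by (simp add: mul_scale_left mul_scale_right mul_minus_left mul_minus_right R.scale R.neg)
    then show "mul x y \<in> {x. R x = scale (- lam) x}"
      using assms(1) scale_cancel_left[of "- lam"] by (simp only: mem_Collect_eq) simp
  qed (auto simp: R.zero R.add R.scale scale_right_distrib scale_left_commute)
  moreover have "A1 \<inter> A2 = {0}"
    using assms(1) by (auto simp: A1_def A2_def R.zero)
  moreover have "\<exists>a1\<in>A1. \<exists>a2\<in>A2. v = a1 + a2" for v
  proof (intro bexI)
    show "v = (v + scale (inverse lam) (R v)) + scale (- inverse lam) (R v)"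
      by (simp add: algebra_simps)
    show "v + scale (inverse lam) (R v) \<in> A1"
      using assms by (simp add: A1_def R.add R.scale)
    show "scale (- inverse lam) (R v) \<in> A2"
      using assms by (simp add: A2_def R.scale R.neg)
  qed
  moreover have "\<forall>a1\<in>A1. \<forall>a2\<in>A2. R (a1 + a2) = scale (- lam) a2"
    by (simp add: A1_def A2_def R.add)
  ultimately show ?thesis
    unfolding splitting_rb_def by blast
qed

lemma square_if_unit_eq_0:
  assumes "alg_unit mul one" and "R one = 0"
  shows "R (R x) = scale (- lam) (R x)"
proof -
  have "R (R x + scale lam x) = 0"
    using rota_baxter_identity[of x one] assms by (simp add: alg_unit_def mul_zero_right R.zero)
  then show ?thesis
    by (simp add: R.add R.scale eq_neg_iff_add_eq_0)
qed

end

lemma rota_baxter_commutator_relation: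
  fixes scale :: "'k::field_char_0 \<Rightarrow> 'v::ab_group_add \<Rightarrow> 'v"
  assumes "rota_baxter_algebra scale mul lam R" and "lam \<noteq> 0" and "alg_unit mul one"
  defines "P \<equiv> \<lambda>v. scale (- inverse lam) (R v)"
  shows "commutator_relation scale (mul (P one)) P one"
proof -
  interpret rota_baxter_algebra scale mul lam R by fact
  have unit: "mul one x = x" "mul x one = x" for x
    using assms(3) by (simp_all add: alg_unit_def)
  have "mul (P one) (P v) - P (mul (P one) v) = P (P v) - P v" for v
  proof -
    have "mul (P one) (P v) = scale (inverse lam * inverse lam) (mul (R one) (R v))"
      by (simp add: P_def mul_scale_left mul_scale_right mul_minus_left mul_minus_right)
    also have "\<dots> = P (mul (P one) v) + P (P v) - P v"
      using rota_baxter_identity[of one v] assms(2)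
      by (simp add: P_def unit R.add R.scale R.neg mul_scale_left mul_minus_left scale_right_distrib)
    finally show ?thesis
      by (simp add: algebra_simps)
  qed
  moreover have "Vector_Spaces.linear scale scale P"
    unfolding P_def by (simp add: Vector_Spaces.linear_iff vector_space_axioms R.add R.scale scale_right_distrib)
  ultimately show ?thesis
    unfolding commutator_relation_def commutator_relation_axioms_def
    by (simp add: vector_space_axioms linear_mul_left unit)
qed

lemma rota_baxter_unit_eq_0_if_nilpotent:
  fixes scale :: "'k::field_char_0 \<Rightarrow> 'v::ab_group_add \<Rightarrow> 'v"
  assumes "rota_baxter_algebra scale mul lam R" and "lam \<noteq> 0" and "alg_unit mul one"
    and "nilpotent_elt mul (R one)"
  shows "R one = 0"
proof -
  interpret rota_baxter_algebra scale mul lam R by fact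
  define u where "u = scale (- inverse lam) (R one)"
  interpret commutator_relation scale "mul u" "\<lambda>v. scale (- inverse lam) (R v)" one
    unfolding u_def by (rule rota_baxter_commutator_relation[OF assms(1-3)])
  obtain n where "apow mul (R one) (Suc n) = 0"
    using assms(4) unfolding nilpotent_elt_def by (metis Suc_diff_1 less_eq_Suc_le One_nat_def)
  then have "apow mul u (Suc n) = 0"
    by (simp only: u_def apow_scale) simp
  then have "(mul u ^^ Suc n) one = 0"
    using assms(3) by (simp add: apow_Suc_eq_funpow funpow_Suc_right alg_unit_def del: funpow.simps)
  then have "mul u one = 0"
    by (rule funpow_e_eq_0_imp_L_e_eq_0)
  then show "R one = 0"
    using assms(2,3) by (simp add: u_def alg_unit_def)
qed

theorem lemma3:
  fixes scale :: "'k::field_char_0 \<Rightarrow> 'v::ab_group_add \<Rightarrow> 'v"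
    and mul :: "'v \<Rightarrow> 'v \<Rightarrow> 'v" and one :: 'v
    and lam :: 'k and R :: "'v \<Rightarrow> 'v"
  assumes "vector_space scale"
    and "bilinear_mul scale mul"
    and "alg_unit mul one"
    and "power_assoc scale mul"
    and "rota_baxter scale mul lam R"
    and "lam \<noteq> 0"
    and "nilpotent_elt mul (R one)"
  shows "R one = 0 \<and> splitting_rb scale mul lam R"
proof -
  have rb: "rota_baxter_algebra scale mul lam R"
    using assms(1,2,5) by (simp add: rota_baxter_algebra_def rota_baxter_algebra_axioms_def)
  then interpret rota_baxter_algebra scale mul lam R .
  have "R one = 0"
    using rb assms(6,3,7) by (rule rota_baxter_unit_eq_0_if_nilpotent)
  moreover have "splitting_rb scale mul lam R"
    using assms(6) square_if_unit_eq_0[OF assms(3) \<open>R one = 0\<close>] by (rule splitting_if_square)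
  ultimately show ?thesis ..
qed

end
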